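(* There is an absolute constant $c>0$ such that for all sufficiently large $n$ there is no graph on $n$ vertices in which every induced subgraph on $c\log^3 n/\log\log n$ vertices contains both a clique of size $\log n$ and an independent set of size $\log n$.
   Context: Logarithms are natural; floors and ceilings are ignored. *)

theory Defs
  imports Complex_Main
begin

text \<open>A finite simple graph on the vertex set {0..<n}: an edge relation E that is
symmetric and irreflexive (only its restriction to the vertex set matters).\<close>
definition simple_graph :: "(nat \<Rightarrow> nat \<Rightarrow> bool) \<Rightarrow> bool" where
  "simple_graph E \<longleftrightarrow> (\<forall>u v. E u v \<longrightarrow> E v u) \<and> (\<forall>v. \<not> E v v)"

definition has_clique :: "(nat \<Rightarrow> nat \<Rightarrow> bool) \<Rightarrow> nat set \<Rightarrow> nat \<Rightarrow> bool" where
  "has_clique E S k \<longleftrightarrow> (\<exists>K. K \<subseteq> S \<and> card K = k \<and> (\<forall>u\<in>K. \<forall>v\<in>K. u \<noteq> v \<longrightarrow> E u v))"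

definition has_indep :: "(nat \<Rightarrow> nat \<Rightarrow> bool) \<Rightarrow> nat set \<Rightarrow> nat \<Rightarrow> bool" where
  "has_indep E S k \<longleftrightarrow> (\<exists>I. I \<subseteq> S \<and> card I = k \<and> (\<forall>u\<in>I. \<forall>v\<in>I. u \<noteq> v \<longrightarrow> \<not> E u v))"

end

(*
  Let L = ln n, k = L and m = L^3 / (100 ln L), and suppose every m-set of vertices contains both
  a k-clique and an independent k-set. Counting independent k-sets inside a set Y of at least m
  vertices in two ways (every m-subset contains one; each lies in C(|Y|-k, m-k) of the m-subsets)
  shows that some independent set T of size k/2 has at least |Y| / k^10 common non-neighbours in
  Y, since otherwise there would be at most |Y|^k / k^(5k) independent k-sets. Iterating inside
  these common non-neighbourhoods r ~ 2m/k^2 times produces an independent set of size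
  q ~ m/(k-1) in every set of n - (k-1)q vertices, because m k^(10r) <= sqrt n. Greedily taking
  k-1 disjoint such sets gives at least m vertices covered by k-1 independent sets, which contain
  no k-clique: a contradiction.
*)

theory Submission
  imports Defs "HOL-Real_Asymp.Real_Asymp"
begin

definition indep_set :: "(nat \<Rightarrow> nat \<Rightarrow> bool) \<Rightarrow> nat set \<Rightarrow> bool" where
  "indep_set E I \<longleftrightarrow> (\<forall>u\<in>I. \<forall>v\<in>I. u \<noteq> v \<longrightarrow> \<not> E u v)"

definition clique_set :: "(nat \<Rightarrow> nat \<Rightarrow> bool) \<Rightarrow> nat set \<Rightarrow> bool" where
  "clique_set E K \<longleftrightarrow> (\<forall>u\<in>K. \<forall>v\<in>K. u \<noteq> v \<longrightarrow> E u v)"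

definition indep_subsets :: "(nat \<Rightarrow> nat \<Rightarrow> bool) \<Rightarrow> nat set \<Rightarrow> nat \<Rightarrow> nat set set" where
  "indep_subsets E Y k = {K. K \<subseteq> Y \<and> card K = k \<and> indep_set E K}"

text \<open>Both orientations of an edge are excluded.\<close>

definition common_nonnbrs :: "(nat \<Rightarrow> nat \<Rightarrow> bool) \<Rightarrow> nat set \<Rightarrow> nat set \<Rightarrow> nat set" where
  "common_nonnbrs E Y T = {y\<in>Y. y \<notin> T \<and> (\<forall>t\<in>T. \<not> E y t \<and> \<not> E t y)}"

lemma has_indep_iff: "has_indep E S k \<longleftrightarrow> (\<exists>I\<subseteq>S. card I = k \<and> indep_set E I)"
  unfolding has_indep_def indep_set_def by blast

lemma has_clique_iff: "has_clique E S k \<longleftrightarrow> (\<exists>K\<subseteq>S. card K = k \<and> clique_set E K)"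
  unfolding has_clique_def clique_set_def by blast

lemma indep_set_subset: "indep_set E J \<Longrightarrow> I \<subseteq> J \<Longrightarrow> indep_set E I"
  unfolding indep_set_def by blast

lemma card_le_1_if_clique_set_indep_set:
  assumes "finite K" "clique_set E K" "indep_set E K"
  shows "card K \<le> 1"
  using assms unfolding clique_set_def indep_set_def by (auto simp: card_le_Suc0_iff_eq)

lemma finite_indep_subsets: "finite Y \<Longrightarrow> finite (indep_subsets E Y k)"
  unfolding indep_subsets_def by (rule finite_subset[of _ "Pow Y"]) auto

lemma finite_common_nonnbrs: "finite Y \<Longrightarrow> finite (common_nonnbrs E Y T)"
  unfolding common_nonnbrs_def by simp

lemma binomial_le_power: "n choose k \<le> n ^ k"
  by (cases "k \<le> n") (auto simp: binomial_le_pow binomial_eq_0)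

lemma power_le_power_mult_binomial:
  assumes "k \<le> n"
  shows "n ^ k \<le> k ^ k * (n choose k)"
proof (cases "k = 0")
  case False
  have "real n ^ k = (real n / real k) ^ k * real k ^ k"
    using False by (simp add: power_divide)
  also have "\<dots> \<le> real (n choose k) * real k ^ k"
    using binomial_ge_n_over_k_pow_k[OF assms] by (intro mult_right_mono) auto
  finally have "real (n ^ k) \<le> real (k ^ k * (n choose k))" by (simp add: mult.commute)
  then show ?thesis by (simp only: of_nat_le_iff)
qed simp

lemma card_supersets_of_card:
  assumes "finite Y" "K \<subseteq> Y" "card K \<le> m"
  shows "card {S. S \<subseteq> Y \<and> card S = m \<and> K \<subseteq> S} = (card Y - card K) choose (m - card K)"
proof -
  have "finite K" using assms(1,2) by (rule finite_subset[rotated])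
  have "{S. S \<subseteq> Y \<and> card S = m \<and> K \<subseteq> S} = (\<union>) K ` {R. R \<subseteq> Y - K \<and> card R = m - card K}"
  proof (intro equalityI subsetI)
    fix S assume S: "S \<in> {S. S \<subseteq> Y \<and> card S = m \<and> K \<subseteq> S}"
    then have "S = K \<union> (S - K)" "card (S - K) = m - card K"
      using \<open>finite K\<close> by (auto simp: card_Diff_subset)
    with S show "S \<in> (\<union>) K ` {R. R \<subseteq> Y - K \<and> card R = m - card K}" by blast
  next
    fix S assume "S \<in> (\<union>) K ` {R. R \<subseteq> Y - K \<and> card R = m - card K}"
    then obtain R where R: "R \<subseteq> Y - K" "card R = m - card K" "S = K \<union> R" by blast
    have "finite R" using R(1) assms(1) by (meson finite_Diff finite_subset)
    then have "card S = card K + card R"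
      unfolding R(3) using \<open>finite K\<close> R(1) by (intro card_Un_disjoint) auto
    with R assms show "S \<in> {S. S \<subseteq> Y \<and> card S = m \<and> K \<subseteq> S}" by auto
  qed
  moreover have "inj_on ((\<union>) K) {R. R \<subseteq> Y - K \<and> card R = m - card K}"
    by (rule inj_onI) blast
  ultimately have "card {S. S \<subseteq> Y \<and> card S = m \<and> K \<subseteq> S} = card (Y - K) choose (m - card K)"
    using assms(1) by (simp add: card_image n_subsets)
  then show ?thesis using assms(1,2) \<open>finite K\<close> by (simp add: card_Diff_subset)
qed

lemma card_indep_subsets_lower:
  assumes "finite Y" "m \<le> card Y" "k \<le> m"
    and indep: "\<And>S. S \<subseteq> Y \<Longrightarrow> card S = m \<Longrightarrow> has_indep E S k"
  shows "card Y choose k \<le> card (indep_subsets E Y k) * (m choose k)"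
proof -
  let ?KK = "indep_subsets E Y k"
  let ?sup = "\<lambda>K. {S. S \<subseteq> Y \<and> card S = m \<and> K \<subseteq> S}"
  let ?c = "(card Y - k) choose (m - k)"
  have "{S. S \<subseteq> Y \<and> card S = m} \<subseteq> (\<Union>K\<in>?KK. ?sup K)"
  proof
    fix S assume S: "S \<in> {S. S \<subseteq> Y \<and> card S = m}"
    then obtain I where "I \<subseteq> S" "card I = k" "indep_set E I"
      using indep by (auto simp: has_indep_iff)
    with S show "S \<in> (\<Union>K\<in>?KK. ?sup K)" by (auto simp: indep_subsets_def)
  qed
  moreover have "finite (\<Union>K\<in>?KK. ?sup K)"
    using assms(1) by (auto intro: finite_subset[of _ "Pow Y"])
  ultimately have "card {S. S \<subseteq> Y \<and> card S = m} \<le> card (\<Union>K\<in>?KK. ?sup K)"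
    by (rule card_mono[rotated])
  also have "\<dots> \<le> (\<Sum>K\<in>?KK. card (?sup K))"
    using assms(1) by (intro card_UN_le finite_indep_subsets)
  also have "\<dots> = (\<Sum>K\<in>?KK. ?c)"
    using assms(1,3) by (intro sum.cong refl) (auto simp: indep_subsets_def card_supersets_of_card)
  finally have "card Y choose m \<le> card ?KK * ?c"
    by (simp add: n_subsets assms(1))
  then have "(card Y choose k) * ?c \<le> card ?KK * (m choose k) * ?c"
    unfolding choose_mult[OF assms(3,2), symmetric] by (simp add: ac_simps)
  moreover have "0 < ?c"
    using assms(2,3) by (intro zero_less_binomial) linarith
  ultimately show ?thesis using mult_le_cancel2 by blast
qed

lemma card_indep_subsets_le_sum:
  assumes "finite Y" "l \<le> k"
  shows "card (indep_subsets E Y k)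
           \<le> (\<Sum>T\<in>indep_subsets E Y l. card (common_nonnbrs E Y T) choose (k - l))"
proof -
  let ?B = "\<lambda>T. {R. R \<subseteq> common_nonnbrs E Y T \<and> card R = k - l}"
  have "indep_subsets E Y k \<subseteq> (\<Union>T\<in>indep_subsets E Y l. (\<union>) T ` ?B T)"
  proof
    fix K assume K: "K \<in> indep_subsets E Y k"
    then have "finite K" "l \<le> card K"
      using assms by (auto simp: indep_subsets_def dest: finite_subset)
    then obtain T where T: "T \<subseteq> K" "card T = l"
      by (meson obtain_subset_with_card_n)
    have "T \<in> indep_subsets E Y l"
      using K T indep_set_subset[of E K T] by (auto simp: indep_subsets_def)
    moreover have "K - T \<subseteq> common_nonnbrs E Y T"
      using K T(1) by (fastforce simp: indep_subsets_def common_nonnbrs_def indep_set_def)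
    moreover have "card (K - T) = k - l"
      using K T \<open>finite K\<close> by (simp add: indep_subsets_def card_Diff_subset finite_subset)
    moreover have "K = T \<union> (K - T)" using T by blast
    ultimately show "K \<in> (\<Union>T\<in>indep_subsets E Y l. (\<union>) T ` ?B T)" by blast
  qed
  moreover have fin_B: "finite (?B T)" for T
    by (rule finite_subset[of _ "Pow (common_nonnbrs E Y T)"])
      (auto simp: assms(1) finite_common_nonnbrs)
  ultimately have "card (indep_subsets E Y k) \<le> card (\<Union>T\<in>indep_subsets E Y l. (\<union>) T ` ?B T)"
    using assms(1) by (intro card_mono finite_UN_I finite_indep_subsets finite_imageI)
  also have "\<dots> \<le> (\<Sum>T\<in>indep_subsets E Y l. card ((\<union>) T ` ?B T))"
    using assms(1) by (intro card_UN_le finite_indep_subsets)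
  also have "\<dots> \<le> (\<Sum>T\<in>indep_subsets E Y l. card (?B T))"
    by (intro sum_mono card_image_le fin_B)
  also have "\<dots> = (\<Sum>T\<in>indep_subsets E Y l. card (common_nonnbrs E Y T) choose (k - l))"
    using assms(1) by (simp add: n_subsets finite_common_nonnbrs)
  finally show ?thesis .
qed

lemma card_indep_subsets_upper:
  assumes "finite Y" "l \<le> k"
    and sparse: "\<And>T. T \<in> indep_subsets E Y l \<Longrightarrow> card (common_nonnbrs E Y T) * d \<le> card Y"
  shows "card (indep_subsets E Y k) * d ^ (k - l) \<le> card Y ^ k"
proof -
  let ?TT = "indep_subsets E Y l"
  have "card ?TT \<le> card {T. T \<subseteq> Y \<and> card T = l}"
    using assms(1) by (intro card_mono) (auto simp: indep_subsets_def)
  then have TT: "card ?TT \<le> card Y ^ l"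
    using binomial_le_power[of "card Y" l] by (simp add: n_subsets assms(1))
  have "card (indep_subsets E Y k) * d ^ (k - l)
          \<le> (\<Sum>T\<in>?TT. (card (common_nonnbrs E Y T) choose (k - l)) * d ^ (k - l))"
    using mult_le_mono1[OF card_indep_subsets_le_sum[OF assms(1,2)]]
    by (simp add: sum_distrib_right)
  also have "\<dots> \<le> (\<Sum>T\<in>?TT. card Y ^ (k - l))"
  proof (rule sum_mono)
    fix T assume "T \<in> ?TT"
    have "(card (common_nonnbrs E Y T) choose (k - l)) * d ^ (k - l)
            \<le> (card (common_nonnbrs E Y T) * d) ^ (k - l)"
      by (simp add: power_mult_distrib binomial_le_power)
    also have "\<dots> \<le> card Y ^ (k - l)"
      using sparse[OF \<open>T \<in> ?TT\<close>] by (rule power_mono) simp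
    finally show "(card (common_nonnbrs E Y T) choose (k - l)) * d ^ (k - l) \<le> card Y ^ (k - l)" .
  qed
  also have "\<dots> = card ?TT * card Y ^ (k - l)" by simp
  also have "\<dots> \<le> card Y ^ l * card Y ^ (k - l)" using TT by (rule mult_le_mono1)
  also have "\<dots> = card Y ^ k" using assms(2) by (simp flip: power_add)
  finally show ?thesis .
qed

lemma power_le_if_sparse_common_nonnbrs:
  assumes "finite Y" "m \<le> card Y" "k \<le> m" "l \<le> k"
    and indep: "\<And>S. S \<subseteq> Y \<Longrightarrow> card S = m \<Longrightarrow> has_indep E S k"
    and sparse: "\<And>T. T \<in> indep_subsets E Y l \<Longrightarrow> card (common_nonnbrs E Y T) * d \<le> card Y"
  shows "d ^ (k - l) \<le> (k * m) ^ k"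
proof -
  let ?K = "card (indep_subsets E Y k)"
  have lower: "card Y choose k \<le> ?K * m ^ k"
    using card_indep_subsets_lower[OF assms(1-3) indep] binomial_le_power[of m k]
    by (meson le_trans mult_le_mono2)
  have "?K * d ^ (k - l) \<le> card Y ^ k"
    using card_indep_subsets_upper[OF assms(1,4) sparse] .
  also have "\<dots> \<le> k ^ k * (card Y choose k)"
    using assms(2,3) by (intro power_le_power_mult_binomial) simp
  also have "\<dots> \<le> ?K * (k * m) ^ k"
    using lower by (simp add: power_mult_distrib)
  finally have "?K * d ^ (k - l) \<le> ?K * (k * m) ^ k" .
  moreover have "0 < card Y choose k"
    using assms(2,3) by (intro zero_less_binomial) linarith
  then have "0 < ?K"
    using lower by (cases "?K = 0") auto
  ultimately show ?thesis by simp
qed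

lemma ex_dense_common_nonnbrs:
  assumes "finite Y" "m \<le> card Y" "k \<le> m" "l \<le> k" "(k * m) ^ k < d ^ (k - l)"
    and indep: "\<And>S. S \<subseteq> Y \<Longrightarrow> card S = m \<Longrightarrow> has_indep E S k"
  shows "\<exists>T\<in>indep_subsets E Y l. card Y < card (common_nonnbrs E Y T) * d"
  using power_le_if_sparse_common_nonnbrs[OF assms(1-4) indep] assms(5) by (meson not_le)

lemma ex_indep_set_with_large_common_nonnbrs:
  assumes "finite W" "0 < k" "k \<le> m" "l \<le> k" "(k * m) ^ k < d ^ (k - l)"
    and indep: "\<And>S. S \<subseteq> W \<Longrightarrow> card S = m \<Longrightarrow> has_indep E S k"
    and "m * d ^ j \<le> card W"
  shows "\<exists>J Y. J \<subseteq> W \<and> Y \<subseteq> W - J \<and> indep_set E J \<and> card J = j * l \<and>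
           (\<forall>y\<in>Y. \<forall>t\<in>J. \<not> E y t \<and> \<not> E t y) \<and> card W \<le> card Y * d ^ j"
proof -
  have "0 < (k * m) ^ k"
    using assms(2,3) by simp
  then have "0 < d"
    using assms(5) by (cases "d = 0") (auto simp: power_0_left split: if_splits)
  show ?thesis
    using assms(7)
  proof (induction j)
    case 0
    show ?case by (intro exI[of _ "{}"] exI[of _ W]) (auto simp: indep_set_def)
  next
    case (Suc j)
    have "m * d ^ j \<le> m * d ^ Suc j"
      using \<open>0 < d\<close> by (intro mult_le_mono2 power_increasing) auto
    then have "m * d ^ j \<le> card W"
      using Suc.prems by linarith
    then obtain J Y where JY: "J \<subseteq> W" "Y \<subseteq> W - J" "indep_set E J" "card J = j * l"
        "\<forall>y\<in>Y. \<forall>t\<in>J. \<not> E y t \<and> \<not> E t y" "card W \<le> card Y * d ^ j"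
      using Suc.IH by blast
    have "m * d ^ j \<le> card Y * d ^ j"
      using \<open>m * d ^ j \<le> card W\<close> JY(6) by linarith
    then have "m \<le> card Y"
      using \<open>0 < d\<close> by simp
    have "finite Y" using JY(2) assms(1) by (meson finite_Diff finite_subset)
    have indep_Y: "has_indep E S k" if "S \<subseteq> Y" "card S = m" for S
      using indep JY(2) that by blast
    obtain T where T: "T \<in> indep_subsets E Y l" "card Y < card (common_nonnbrs E Y T) * d"
      using ex_dense_common_nonnbrs[OF \<open>finite Y\<close> \<open>m \<le> card Y\<close> assms(3-5) indep_Y] by blast
    have "finite J" "finite T" "T \<subseteq> Y"
      using JY(1,2) T(1) assms(1) by (auto simp: indep_subsets_def dest: finite_subset)
    show ?case
    proof (intro exI conjI)
      show "J \<union> T \<subseteq> W" "common_nonnbrs E Y T \<subseteq> W - (J \<union> T)"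
        using JY(1,2,5) \<open>T \<subseteq> Y\<close> by (auto simp: common_nonnbrs_def)
      show "indep_set E (J \<union> T)"
        using JY(3,5) T(1) \<open>T \<subseteq> Y\<close> unfolding indep_set_def indep_subsets_def by blast
      show "card (J \<union> T) = Suc j * l"
        using JY(2,4) T(1) \<open>finite J\<close> \<open>finite T\<close> \<open>T \<subseteq> Y\<close>
        by (subst card_Un_disjoint) (auto simp: indep_subsets_def)
      show "\<forall>y\<in>common_nonnbrs E Y T. \<forall>t\<in>J \<union> T. \<not> E y t \<and> \<not> E t y"
        using JY(5) by (auto simp: common_nonnbrs_def)
      have "card W \<le> card Y * d ^ j" by (rule JY(6))
      also have "\<dots> \<le> card (common_nonnbrs E Y T) * d * d ^ j"
        using T(2) by (intro mult_le_mono1) simp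
      finally show "card W \<le> card (common_nonnbrs E Y T) * d ^ Suc j"
        by (simp add: ac_simps)
    qed
  qed
qed

lemma ex_subset_clique_number_le:
  assumes "finite V"
    and indep: "\<And>W. W \<subseteq> V \<Longrightarrow> card V \<le> card W + j * q \<Longrightarrow> \<exists>I\<subseteq>W. card I = q \<and> indep_set E I"
  shows "\<exists>A\<subseteq>V. card A = j * q \<and> (\<forall>K\<subseteq>A. clique_set E K \<longrightarrow> card K \<le> j)"
  using indep
proof (induction j)
  case 0
  show ?case by (intro exI[of _ "{}"]) auto
next
  case (Suc j)
  have "\<exists>I\<subseteq>W. card I = q \<and> indep_set E I" if "W \<subseteq> V" "card V \<le> card W + j * q" for W
  proof -
    have "card V \<le> card W + Suc j * q" using that(2) by simp
    then show ?thesis using Suc.prems that(1) by blast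
  qed
  then obtain A where A: "A \<subseteq> V" "card A = j * q" "\<forall>K\<subseteq>A. clique_set E K \<longrightarrow> card K \<le> j"
    using Suc.IH by blast
  have "finite A" using A(1) assms(1) by (rule finite_subset)
  then have "card (V - A) + j * q = card V"
    using A(1,2) card_mono[OF assms(1) A(1)] by (simp add: card_Diff_subset)
  then have "card V \<le> card (V - A) + Suc j * q"
    by simp
  then obtain I where I: "I \<subseteq> V - A" "card I = q" "indep_set E I"
    using Suc.prems[OF Diff_subset] by blast
  have "finite I" using I(1) assms(1) by (meson finite_Diff finite_subset)
  show ?case
  proof (intro exI conjI allI impI)
    show "A \<union> I \<subseteq> V"
      using A(1) I(1) by blast
    show "card (A \<union> I) = Suc j * q"
      using A(2) I(1,2) \<open>finite A\<close> \<open>finite I\<close> by (subst card_Un_disjoint) auto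
    fix K assume K: "K \<subseteq> A \<union> I" "clique_set E K"
    have "card K \<le> card (K \<inter> A) + card (K \<inter> I)"
      using K(1) card_Un_le[of "K \<inter> A" "K \<inter> I"] by (simp add: Int_Un_distrib[symmetric] Int_absorb2)
    moreover have "card (K \<inter> A) \<le> j"
      using A(3) K(2) by (simp add: clique_set_def)
    moreover have "card (K \<inter> I) \<le> 1"
      using K(2) I(3) \<open>finite I\<close>
      by (intro card_le_1_if_clique_set_indep_set) (auto simp: clique_set_def indep_set_def)
    ultimately show "card K \<le> Suc j" by linarith
  qed
qed

theorem ex_subset_without_clique:
  assumes "finite V" "0 < k" "k \<le> m" "l \<le> k" "(k * m) ^ k < d ^ (k - l)"
    and indep: "\<And>S. S \<subseteq> V \<Longrightarrow> card S = m \<Longrightarrow> has_indep E S k"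
    and "m \<le> (k - 1) * q" "q \<le> r * l" "m * d ^ r + (k - 1) * q \<le> card V"
  shows "\<exists>S\<subseteq>V. card S = m \<and> \<not> has_clique E S k"
proof -
  have indep_q: "\<exists>I\<subseteq>W. card I = q \<and> indep_set E I"
    if W: "W \<subseteq> V" "card V \<le> card W + (k - 1) * q" for W
  proof -
    have "finite W" using W(1) assms(1) by (rule finite_subset)
    have "m * d ^ r \<le> card W" using W(2) assms(9) by linarith
    have indep_W: "has_indep E S k" if "S \<subseteq> W" "card S = m" for S
      using indep W(1) that by blast
    obtain J where J: "J \<subseteq> W" "indep_set E J" "card J = r * l"
      using ex_indep_set_with_large_common_nonnbrs
          [OF \<open>finite W\<close> assms(2-5) indep_W \<open>m * d ^ r \<le> card W\<close>]
      by blast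
    obtain I where "I \<subseteq> J" "card I = q"
      using obtain_subset_with_card_n[of q J] assms(8) J(3) by auto
    then show ?thesis using J(1) indep_set_subset[OF J(2)] by blast
  qed
  obtain A where A: "A \<subseteq> V" "card A = (k - 1) * q" "\<forall>K\<subseteq>A. clique_set E K \<longrightarrow> card K \<le> k - 1"
    using ex_subset_clique_number_le[of V "k - 1" q E, OF assms(1) indep_q] by auto
  obtain S where S: "S \<subseteq> A" "card S = m"
    using obtain_subset_with_card_n[of m A] assms(7) A(2) by auto
  have "\<not> has_clique E S k"
  proof
    assume "has_clique E S k"
    then obtain K where "K \<subseteq> S" "card K = k" "clique_set E K"
      by (auto simp: has_clique_iff)
    then have "k \<le> k - 1" using A(3) S(1) by (metis subset_trans)
    then show False using assms(2) by linarith
  qed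
  then show ?thesis using A(1) S by blast
qed

text \<open>For \<open>n = exp L\<close>, \<open>k = \<lfloor>L\<rfloor>\<close> and \<open>m = \<lceil>L ^ 3 / (100 ln L)\<rceil>\<close> these conditions give
  \<open>k \<le> m < k ^ 4\<close> and bound the number \<open>r\<close> of rounds so that \<open>m * (k ^ 10) ^ r\<close> stays below
  about \<open>exp (L / 2)\<close>; see \<open>greedy_vertex_budget_le\<close>.\<close>

definition admissible_log_scale :: "real \<Rightarrow> bool" where
  "admissible_log_scale L \<longleftrightarrow> 3 \<le> L \<and> L \<le> 1/100 * L ^ 3 / ln L \<and>
     1/100 * L ^ 3 / ln L + 1 < (L - 1) ^ 4 \<and>
     10 * (((1/100 * L ^ 3 / ln L + 1) / (L - 2) + 1) / ((L - 2) / 2) + 1) * ln L \<le> L / 2 \<and>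
     (1/100 * L ^ 3 / ln L + 1) * exp (L / 2) + (1/100 * L ^ 3 / ln L + 1) + L \<le> exp L"

lemma eventually_admissible_log_scale: "\<forall>\<^sub>F L in at_top. admissible_log_scale L"
  unfolding admissible_log_scale_def by (intro eventually_conj; real_asymp)

lemma le_mult_Suc_div: "0 < b \<Longrightarrow> a \<le> b * (a div b + 1)"
  for a b :: nat
  using dividend_less_times_div[of b a] by (simp add: algebra_simps)

lemma real_Suc_div_le: "real (a div b + 1) \<le> real a / real b + 1"
  using of_nat_div_le_of_nat[of a b] by simp

lemma power_le_exp_half:
  assumes "real k \<le> L" "0 < L" "real j * ln L \<le> L / 2"
  shows "real k ^ j \<le> exp (L / 2)"
proof -
  have "real k ^ j \<le> L ^ j" using assms(1) by (intro power_mono) auto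
  also have "\<dots> = exp (real j * ln L)" using assms(2) by (simp add: exp_of_nat_mult)
  also have "\<dots> \<le> exp (L / 2)" using assms(3) by simp
  finally show ?thesis .
qed

lemma mult_power_lt_of_lt_power_4:
  fixes k m :: nat
  assumes "0 < k" "m < k ^ 4"
  shows "(k * m) ^ k < (k ^ 10) ^ (k - k div 2)"
proof -
  have "k * m < k * k ^ 4" using assms by simp
  also have "\<dots> = k ^ 5" by (simp add: numeral_eq_Suc)
  finally have "(k * m) ^ k < (k ^ 5) ^ k" using assms(1) by (intro power_strict_mono) auto
  also have "\<dots> \<le> (k ^ 10) ^ (k - k div 2)"
    unfolding power_mult[symmetric] using assms(1) by (intro power_increasing) auto
  finally show ?thesis .
qed

lemma greedy_vertex_budget_le:
  fixes L M :: real and k m n q r :: nat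
  assumes q_def: "q = m div (k - 1) + 1" and r_def: "r = q div (k div 2) + 1"
    and k: "real k \<le> L" "L - 1 < real k" and "3 \<le> L" "real m < M"
    and r_small: "10 * ((M / (L - 2) + 1) / ((L - 2) / 2) + 1) * ln L \<le> L / 2"
    and n_large: "M * exp (L / 2) + M + L \<le> real n"
  shows "m * (k ^ 10) ^ r + (k - 1) * q \<le> n"
proof -
  have "3 \<le> k" "real (k - 1) = real k - 1" using k \<open>3 \<le> L\<close> by linarith+
  have "real q \<le> real m / real (k - 1) + 1"
    unfolding q_def by (rule real_Suc_div_le)
  also have "real m / real (k - 1) \<le> M / (L - 2)"
    using k \<open>3 \<le> L\<close> \<open>real m < M\<close> \<open>real (k - 1) = real k - 1\<close> by (intro frac_le) auto
  finally have q: "real q \<le> M / (L - 2) + 1" by simp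
  have "k \<le> 2 * (k div 2) + 1" by simp
  then have "real k \<le> 2 * real (k div 2) + 1" by linarith
  then have "L - 2 \<le> 2 * real (k div 2)" using k(2) by linarith
  then have l: "(L - 2) / 2 \<le> real (k div 2)" by simp
  have "real r \<le> real q / real (k div 2) + 1"
    unfolding r_def by (rule real_Suc_div_le)
  moreover have "real q / real (k div 2) \<le> (M / (L - 2) + 1) / ((L - 2) / 2)"
    using q l \<open>3 \<le> L\<close> by (intro frac_le) auto
  ultimately have "real r \<le> (M / (L - 2) + 1) / ((L - 2) / 2) + 1"
    by linarith
  moreover have "0 < ln L" using \<open>3 \<le> L\<close> by (intro ln_gt_zero) simp
  ultimately have "10 * real r * ln L \<le> 10 * ((M / (L - 2) + 1) / ((L - 2) / 2) + 1) * ln L"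
    by (intro mult_right_mono mult_left_mono) auto
  then have "real (10 * r) * ln L \<le> L / 2"
    using r_small by simp
  then have "real k ^ (10 * r) \<le> exp (L / 2)"
    using k(1) \<open>3 \<le> L\<close> by (intro power_le_exp_half) auto
  then have "real (m * (k ^ 10) ^ r) \<le> M * exp (L / 2)"
    using \<open>real m < M\<close> by (simp add: power_mult mult_mono)
  moreover have "(k - 1) * q \<le> m + (k - 1)"
    using times_div_less_eq_dividend[of "k - 1" m] by (simp add: q_def algebra_simps)
  then have "real ((k - 1) * q) \<le> real m + real (k - 1)"
    by (simp only: of_nat_add[symmetric] of_nat_le_iff)
  then have "real ((k - 1) * q) \<le> M + L"
    using k \<open>real m < M\<close> \<open>real (k - 1) = real k - 1\<close> by linarith
  ultimately have "real (m * (k ^ 10) ^ r + (k - 1) * q) \<le> real n"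
    using n_large by simp
  then show ?thesis by (simp only: of_nat_le_iff)
qed

lemma no_dense_graph_of_log_bounds:
  fixes n :: nat
  defines "L \<equiv> ln (real n)"
  assumes "0 < n" and L_ge: "3 \<le> L" and L_le: "L \<le> 1/100 * L ^ 3 / ln L"
    and m_small: "1/100 * L ^ 3 / ln L + 1 < (L - 1) ^ 4"
    and r_small:
      "10 * (((1/100 * L ^ 3 / ln L + 1) / (L - 2) + 1) / ((L - 2) / 2) + 1) * ln L \<le> L / 2"
    and n_large: "(1/100 * L ^ 3 / ln L + 1) * exp (L / 2) + (1/100 * L ^ 3 / ln L + 1) + L \<le> exp L"
  shows "\<not> (\<exists>E. simple_graph E \<and>
     (\<forall>S. S \<subseteq> {0..<n} \<and> card S = nat \<lceil>1/100 * L ^ 3 / ln L\<rceil> \<longrightarrow>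
        has_clique E S (nat \<lfloor>L\<rfloor>) \<and> has_indep E S (nat \<lfloor>L\<rfloor>)))"
proof
  define k where "k = nat \<lfloor>L\<rfloor>"
  define m where "m = nat \<lceil>1/100 * L ^ 3 / ln L\<rceil>"
  define q where "q = m div (k - 1) + 1"
  define r where "r = q div (k div 2) + 1"
  assume "\<exists>E. simple_graph E \<and> (\<forall>S. S \<subseteq> {0..<n} \<and> card S = nat \<lceil>1/100 * L ^ 3 / ln L\<rceil> \<longrightarrow>
        has_clique E S (nat \<lfloor>L\<rfloor>) \<and> has_indep E S (nat \<lfloor>L\<rfloor>))"
  then obtain E where dense: "\<And>S. S \<subseteq> {0..<n} \<Longrightarrow> card S = m \<Longrightarrow> has_clique E S k \<and> has_indep E S k"
    unfolding k_def m_def by blast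
  have "0 < ln L" using L_ge by (intro ln_gt_zero) simp
  have k: "real k \<le> L" "L - 1 < real k" "3 \<le> k"
    using L_ge unfolding k_def by linarith+
  have "0 \<le> 1/100 * L ^ 3 / ln L" using \<open>0 < ln L\<close> L_ge by simp
  then have "real m = of_int \<lceil>1/100 * L ^ 3 / ln L\<rceil>" unfolding m_def by simp
  then have m: "1/100 * L ^ 3 / ln L \<le> real m" "real m < 1/100 * L ^ 3 / ln L + 1"
    by linarith+
  have "k \<le> m" using k(1) m(1) L_le by linarith
  have "(L - 1) ^ 4 < real k ^ 4" using k(2) L_ge by (intro power_strict_mono) auto
  then have "real m < real k ^ 4" using m(2) m_small by linarith
  then have "(k * m) ^ k < (k ^ 10) ^ (k - k div 2)"
    using k(3) by (intro mult_power_lt_of_lt_power_4) (simp_all flip: of_nat_power)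
  moreover have "m \<le> (k - 1) * q" unfolding q_def using k(3) by (intro le_mult_Suc_div) simp
  moreover have "q \<le> r * (k div 2)"
    unfolding r_def using le_mult_Suc_div[of "k div 2" q] k(3) by (simp add: mult.commute)
  moreover have "m * (k ^ 10) ^ r + (k - 1) * q \<le> n"
    using greedy_vertex_budget_le[OF q_def r_def k(1,2) L_ge m(2) r_small] n_large \<open>0 < n\<close>
    by (simp add: L_def)
  ultimately obtain S where "S \<subseteq> {0..<n}" "card S = m" "\<not> has_clique E S k"
    using ex_subset_without_clique[of "{0..<n}" k m "k div 2" "k ^ 10" E q r] \<open>k \<le> m\<close> k(3) dense
    by auto
  with dense show False by blast
qed

theorem mainTheorem9:
  shows "\<exists>c::real. c > 0 \<and> (\<exists>N::nat. \<forall>n\<ge>N. \<not> (\<exists>E. simple_graph E \<and>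
     (\<forall>S. S \<subseteq> {0..<n} \<and> card S = nat \<lceil>c * ln (real n) ^ 3 / ln (ln (real n))\<rceil> \<longrightarrow>
        has_clique E S (nat \<lfloor>ln (real n)\<rfloor>) \<and> has_indep E S (nat \<lfloor>ln (real n)\<rfloor>))))"
proof -
  have "filterlim (\<lambda>n. ln (real n)) at_top sequentially"
    using filterlim_compose[OF ln_at_top filterlim_real_sequentially] .
  from eventually_compose_filterlim[OF eventually_admissible_log_scale this]
  obtain N where N: "\<And>n. N \<le> n \<Longrightarrow> admissible_log_scale (ln (real n))"
    unfolding eventually_sequentially by blast
  show ?thesis
  proof (intro exI[of _ "1/100 :: real"] conjI exI[of _ "Suc N"] allI impI)
    fix n :: nat
    assume "Suc N \<le> n"
    then show "\<not> (\<exists>E. simple_graph E \<and>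
     (\<forall>S. S \<subseteq> {0..<n} \<and> card S = nat \<lceil>1/100 * ln (real n) ^ 3 / ln (ln (real n))\<rceil> \<longrightarrow>
        has_clique E S (nat \<lfloor>ln (real n)\<rfloor>) \<and> has_indep E S (nat \<lfloor>ln (real n)\<rfloor>)))"
      using no_dense_graph_of_log_bounds[of n] N[of n] by (simp add: admissible_log_scale_def)
  qed simp
qed

end
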